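(* Let $F$ be a continuous distribution on $[0,\infty)$ such that either $F\in\mathcal L\setminus\mathcal S$, or $F\in\mathcal L(\gamma)$ for some $\gamma>0$. Then there exists a discontinuous distribution $G$ on $[0,\infty)$ with unbounded support such that, denoting by $H$ the distribution of $XY$ where $X\sim F$ and $Y\sim G$ are independent, we have $G\notin\mathcal L$ and $H\in\mathcal S$, while there is no $t\ge1$ with $\overline H(x)=O\big(\overline F(x/t)\big)$ and there is no $d\in D[G]$ with $\overline H(x)=O\big(\overline F(x/d)\big)$.
   Context: For a distribution $V$, $\overline V=1-V$ denotes its tail. All limits are as $x\to\infty$. For positive functions $f,g$: $f(x)\sim g(x)$ means $f(x)/g(x)\to1$, and $f(x)=O(g(x))$ means $\limsup f(x)/g(x)<\infty$. $D[V]$ denotes the set of all positive points of discontinuity of the distribution $V$. For $\gamma\ge0$, a distribution $V$ belongs to $\mathcal L(\gamma)$ if $\overline V(x)>0$ for all $x$ and $\overline V(x-t)\sim e^{\gamma t}\overline V(x)$ for every real $t$ (for $\gamma>0$ and $V$ lattice, $x,t$ restricted to multiples of the lattice span); $\mathcal L=\mathcal L(0)$ is the class of long-tailed distributions. A distribution $V$ on $[0,\infty)$ is subexponential, written $V\in\mathcal S$, if $\overline V(x)>0$ for all $x$ and $\overline{V*V}(x)\sim 2\overline V(x)$, where $V*V$ is the distribution of the sum of two independent copies of a random variable with distribution $V$. *)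

theory Defs
  imports "HOL-Probability.Probability" "HOL-Library.Landau_Symbols"
begin

definition is_distr :: "real measure \<Rightarrow> bool" where
  "is_distr V \<longleftrightarrow> prob_space V \<and> sets V = sets borel"

definition distr_nonneg :: "real measure \<Rightarrow> bool" where
  "distr_nonneg V \<longleftrightarrow> is_distr V \<and> measure V {..<0} = 0"

definition tail :: "real measure \<Rightarrow> real \<Rightarrow> real" where
  "tail V x = 1 - measure V {..x}"

definition disc_points :: "real measure \<Rightarrow> real set" where
  "disc_points V = {d. d > 0 \<and> measure V {d} > 0}"

definition continuous_distr :: "real measure \<Rightarrow> bool" where
  "continuous_distr V \<longleftrightarrow> (\<forall>x. measure V {x} = 0)"

definition lattice_with :: "real measure \<Rightarrow> real \<Rightarrow> bool" where
  "lattice_with V h \<longleftrightarrow> h > 0 \<and> measure V {x. \<exists>k::int. x = of_int k * h} = 1"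

definition lattice_distr :: "real measure \<Rightarrow> bool" where
  "lattice_distr V \<longleftrightarrow> (\<exists>h. lattice_with V h)"

definition lattice_span :: "real measure \<Rightarrow> real \<Rightarrow> bool" where
  "lattice_span V h \<longleftrightarrow> lattice_with V h \<and> (\<forall>h'. lattice_with V h' \<longrightarrow> h' \<le> h)"

text \<open>The class L(gamma); for gamma > 0 and V lattice, x and t range over multiples of the span.\<close>
definition class_L :: "real \<Rightarrow> real measure \<Rightarrow> bool" where
  "class_L \<gamma> V \<longleftrightarrow> is_distr V \<and> (\<forall>x. tail V x > 0) \<and>
     (if \<gamma> > 0 \<and> lattice_distr V then
        (\<forall>h. lattice_span V h \<longrightarrow> (\<forall>k::int.
           (\<lambda>n::nat. tail V (real n * h - of_int k * h)) \<sim>[sequentially]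
           (\<lambda>n. exp (\<gamma> * (of_int k * h)) * tail V (real n * h))))
      else
        (\<forall>t::real. (\<lambda>x. tail V (x - t)) \<sim>[at_top] (\<lambda>x. exp (\<gamma> * t) * tail V x)))"

abbreviation long_tailed :: "real measure \<Rightarrow> bool" where
  "long_tailed V \<equiv> class_L 0 V"

definition subexponential :: "real measure \<Rightarrow> bool" where
  "subexponential V \<longleftrightarrow> distr_nonneg V \<and> (\<forall>x. tail V x > 0) \<and>
     (\<lambda>x. tail (V \<star> V) x) \<sim>[at_top] (\<lambda>x. 2 * tail V x)"

definition product_distr :: "real measure \<Rightarrow> real measure \<Rightarrow> real measure" where
  "product_distr F G = distr (F \<Otimes>\<^sub>M G) borel (\<lambda>(x, y). x * y)"

end

theory Submission
  imports Defs "HOL-Real_Asymp.Real_Asymp"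
begin

text \<open>Take for \<open>G\<close> the law of \<open>2^N\<close> with \<open>P(N = n) = 2^-(n+1)\<close>. It has atoms and unbounded
  support, and it is not long-tailed because its tail halves across each atom. The product \<open>H\<close> has
  tail \<open>H(x) = \<Sum>n. 2^-(n+1) F(x / 2^n)\<close> (writing \<open>F, H\<close> for the tails), hence dominated variation
  \<open>H(x/2) \<le> 2 H(x)\<close> and the lower bound \<open>H(x) \<ge> F(1) / (4x)\<close>. A unit shift of \<open>x\<close> shifts the
  argument of the \<open>n\<close>-th term by only \<open>2^-n\<close>; uniform continuity of \<open>F\<close> on compacts and the local
  long-tailedness of \<open>F\<close> therefore make \<open>H\<close> long-tailed, and long-tailed plus dominated variation
  gives \<open>H \<in> \<S>\<close>. If \<open>H(x) = O(F(x/t))\<close>: for \<open>F \<in> \<L>(\<gamma>)\<close>, \<open>\<gamma> > 0\<close>, the tail \<open>F\<close> decays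
  exponentially, contradicting \<open>H(x) \<ge> c/x\<close>; for \<open>F \<in> \<L>\<close> a single term of the series shows
  that \<open>F\<close> itself has dominated variation, hence would be subexponential.\<close>

lemma real_distribution_of_is_distr: "is_distr V \<Longrightarrow> real_distribution V"
  unfolding is_distr_def real_distribution_def real_distribution_axioms_def by auto

lemma tail_eq_measure_greaterThan:
  assumes "is_distr V" shows "tail V x = measure V {x<..}"
proof -
  interpret real_distribution V using real_distribution_of_is_distr[OF assms] .
  have "measure V {x<..} = measure V (space V - {..x})" by (rule arg_cong[where f="measure V"]) auto
  also have "\<dots> = 1 - measure V {..x}" by (rule prob_compl) simp
  finally show ?thesis unfolding tail_def by simp
qed

lemma tail_nonneg: "is_distr V \<Longrightarrow> tail V x \<ge> 0"
  by (simp add: tail_eq_measure_greaterThan)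

lemma tail_le_1:
  assumes "is_distr V" shows "tail V x \<le> 1"
proof -
  interpret real_distribution V using real_distribution_of_is_distr[OF assms] .
  show ?thesis unfolding tail_def by simp
qed

lemma tail_antimono:
  assumes "is_distr V" "x \<le> y" shows "tail V y \<le> tail V x"
proof -
  interpret real_distribution V using real_distribution_of_is_distr[OF assms(1)] .
  show ?thesis unfolding tail_def using finite_measure_mono[of "{..x}" "{..y}"] assms(2) by auto
qed

lemma tail_tendsto_0:
  assumes "is_distr V" shows "(tail V \<longlongrightarrow> 0) at_top"
proof -
  interpret real_distribution V using real_distribution_of_is_distr[OF assms] .
  have "((\<lambda>x. 1 - cdf V x) \<longlongrightarrow> 1 - 1) at_top"
    by (intro tendsto_intros cdf_lim_at_top_prob)
  thus ?thesis unfolding tail_def cdf_def by simp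
qed

lemma uniformly_continuous_on_tail:
  assumes "is_distr V" "continuous_distr V"
  shows "uniformly_continuous_on {a..b} (tail V)"
proof -
  interpret real_distribution V using real_distribution_of_is_distr[OF assms(1)] .
  have "tail V = (\<lambda>x. 1 - cdf V x)" by (rule ext) (simp add: tail_def cdf_def)
  moreover have "isCont (cdf V) x" for x
    using assms(2) unfolding continuous_distr_def by (simp add: isCont_cdf)
  ultimately have "continuous_on {a..b} (tail V)"
    by (auto intro!: continuous_at_imp_continuous_on continuous_intros)
  thus ?thesis by (intro compact_uniformly_continuous) auto
qed

lemma continuous_distr_not_lattice:
  assumes "is_distr V" "continuous_distr V"
  shows "\<not> lattice_distr V"
proof
  assume "lattice_distr V"
  then obtain h where h: "lattice_with V h" unfolding lattice_distr_def by blast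
  interpret real_distribution V using real_distribution_of_is_distr[OF assms(1)] .
  have "(\<Union>k\<in>(UNIV::int set). {of_int k * h}) \<in> null_sets V"
  proof (rule null_sets_UN')
    fix k :: int
    have "emeasure V {of_int k * h} = 0"
      using assms(2) unfolding continuous_distr_def by (simp add: emeasure_eq_measure)
    thus "{of_int k * h} \<in> null_sets V" by (auto simp: null_sets_def)
  qed simp
  moreover have "{x. \<exists>k::int. x = of_int k * h} = (\<Union>k\<in>(UNIV::int set). {of_int k * h})" by auto
  ultimately have "measure V {x. \<exists>k::int. x = of_int k * h} = 0"
    by (simp add: measure_def null_sets_def)
  with h show False unfolding lattice_with_def by simp
qed

lemma class_L_tail_pos: "class_L \<gamma> V \<Longrightarrow> tail V x > 0"
  unfolding class_L_def by auto

lemma class_L_tail_ratio: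
  assumes "class_L \<gamma> V" "\<not> (\<gamma> > 0 \<and> lattice_distr V)"
  shows "((\<lambda>x. tail V (x - t) / tail V x) \<longlongrightarrow> exp (\<gamma> * t)) at_top"
proof -
  have "(\<lambda>x. tail V (x - t)) \<sim>[at_top] (\<lambda>x. exp (\<gamma> * t) * tail V x)"
    using assms unfolding class_L_def by auto
  from asymp_equivD[OF this]
  have "((\<lambda>x. tail V (x - t) / (exp (\<gamma> * t) * tail V x)) \<longlongrightarrow> 1) at_top"
    using class_L_tail_pos[OF assms(1)] by (simp add: less_imp_neq[symmetric])
  hence "((\<lambda>x. exp (\<gamma> * t) * (tail V (x - t) / (exp (\<gamma> * t) * tail V x))) \<longlongrightarrow> exp (\<gamma> * t) * 1) at_top"
    by (intro tendsto_intros)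
  thus ?thesis by simp
qed

lemma eventually_le_of_ratio_tendsto:
  assumes "((\<lambda>x. f x / g x) \<longlongrightarrow> l) at_top" "l < c" "\<And>x. g x > 0"
  shows "\<forall>\<^sub>F x in at_top. f x \<le> c * (g x :: real)"
  using order_tendstoD(2)[OF assms(1,2)]
  by eventually_elim (use assms(3) in \<open>simp add: field_simps less_imp_le\<close>)

lemma shift_ratio_tendsto_1_nat:
  fixes T :: "real \<Rightarrow> real"
  assumes pos: "\<And>x. T x > 0"
    and lim: "((\<lambda>x. T (x - 1) / T x) \<longlongrightarrow> 1) at_top"
  shows "((\<lambda>x. T (x - real n) / T x) \<longlongrightarrow> 1) at_top"
proof (induction n)
  case 0 then show ?case using pos by (simp add: less_imp_neq[symmetric])
next
  case (Suc n)
  have "filterlim (\<lambda>x::real. x - 1) at_top at_top" by real_asymp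
  from filterlim_compose[OF Suc this]
  have "((\<lambda>x. T (x - 1 - real n) / T (x - 1) * (T (x - 1) / T x)) \<longlongrightarrow> 1 * 1) at_top"
    by (intro tendsto_mult lim) simp
  moreover have "(\<lambda>x. T (x - 1 - real n) / T (x - 1) * (T (x - 1) / T x)) = (\<lambda>x. T (x - real (Suc n)) / T x)"
  proof
    fix x
    have "T (x - 1) \<noteq> 0" using pos[of "x - 1"] by simp
    thus "T (x - 1 - real n) / T (x - 1) * (T (x - 1) / T x) = T (x - real (Suc n)) / T x"
      by (simp add: algebra_simps)
  qed
  ultimately show ?case by simp
qed

lemma shift_ratio_tendsto_1:
  fixes T :: "real \<Rightarrow> real"
  assumes pos: "\<And>x. T x > 0" and antimono: "\<And>x y. x \<le> y \<Longrightarrow> T y \<le> T x"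
    and lim: "((\<lambda>x. T (x - 1) / T x) \<longlongrightarrow> 1) at_top" and "a \<ge> 0"
  shows "((\<lambda>x. T (x - a) / T x) \<longlongrightarrow> 1) at_top"
proof -
  obtain n :: nat where n: "a \<le> real n" using real_arch_simple by blast
  show ?thesis
  proof (rule tendsto_sandwich[OF _ _ tendsto_const shift_ratio_tendsto_1_nat[OF pos lim]])
    show "\<forall>\<^sub>F x in at_top. 1 \<le> T (x - a) / T x"
      using pos antimono \<open>a \<ge> 0\<close> by (intro always_eventually allI) (simp add: le_divide_eq)
    show "\<forall>\<^sub>F x in at_top. T (x - a) / T x \<le> T (x - real n) / T x"
      using pos antimono n by (intro always_eventually allI divide_right_mono) (auto intro: less_imp_le)
  qed
qed

text \<open>A shift ratio tending to \<open>e\<^sup>\<gamma> > 1\<close> forces geometric decay of \<open>T\<close> along unit steps.\<close>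
lemma mult_self_tendsto_0_of_shift_ratio:
  fixes T :: "real \<Rightarrow> real"
  assumes pos: "\<And>x. T x > 0" and le1: "\<And>x. T x \<le> 1" and "\<gamma> > 0"
    and lim: "((\<lambda>x. T (x - 1) / T x) \<longlongrightarrow> exp \<gamma>) at_top"
  shows "((\<lambda>y. y * T y) \<longlongrightarrow> 0) at_top"
proof -
  define q where "q = exp (\<gamma> / 2)"
  have q1: "q > 1" using \<open>\<gamma> > 0\<close> by (simp add: q_def)
  have "\<forall>\<^sub>F x in at_top. T (x - 1) \<ge> q * T x"
    using order_tendstoD(1)[OF lim, of q] \<open>\<gamma> > 0\<close> pos
    by (auto simp: q_def field_simps elim!: eventually_mono)
  then obtain y1 where step: "\<And>y. y \<ge> y1 \<Longrightarrow> T y \<le> T (y - 1) / q"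
    unfolding eventually_at_top_linorder using q1 by (force simp: field_simps)
  have geometric: "T y \<le> (1/q)^j" if "y \<ge> y1 + real j" for y j
    using that
  proof (induction j arbitrary: y)
    case 0 show ?case using le1 by simp
  next
    case (Suc j)
    have "T y \<le> T (y - 1) / q" by (rule step) (use Suc.prems in auto)
    also have "\<dots> \<le> (1/q)^j / q" using Suc q1 by (intro divide_right_mono) auto
    finally show ?case by (simp add: field_simps)
  qed
  have bound: "y * T y \<le> y * exp (- (\<gamma>/2) * (y - (y1 + 1)))" if "y \<ge> y1 + 1" "y \<ge> 0" for y
  proof -
    define j where "j = nat \<lfloor>y - y1\<rfloor>"
    have j1: "real j \<le> y - y1" and j2: "real j \<ge> y - (y1 + 1)"
      using that unfolding j_def by linarith+
    have "T y \<le> (1/q)^j" using j1 by (intro geometric) simp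
    also have "(1/q)^j = exp (- (\<gamma>/2) * real j)"
      by (simp add: q_def exp_of_nat_mult[symmetric] exp_minus field_simps)
    also have "\<dots> \<le> exp (- (\<gamma>/2) * (y - (y1 + 1)))" using j2 \<open>\<gamma> > 0\<close> by simp
    finally show ?thesis using that by (intro mult_left_mono) auto
  qed
  have decay: "((\<lambda>y. y * exp (- (\<gamma>/2) * (y - (y1 + 1)))) \<longlongrightarrow> 0) at_top"
    using \<open>\<gamma> > 0\<close> by real_asymp
  show ?thesis
  proof (rule tendsto_sandwich[OF _ _ tendsto_const decay])
    show "\<forall>\<^sub>F y in at_top. 0 \<le> y * T y"
      using eventually_ge_at_top[of 0] by eventually_elim (use pos in \<open>simp add: less_imp_le\<close>)
    show "\<forall>\<^sub>F y in at_top. y * T y \<le> y * exp (- (\<gamma>/2) * (y - (y1 + 1)))"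
      using eventually_ge_at_top[of "y1 + 1"] eventually_ge_at_top[of 0] by eventually_elim (rule bound)
  qed
qed

lemma tail_convolution_self_bounds:
  assumes nn: "distr_nonneg V"
  shows "2 * tail V x - tail V x ^ 2 \<le> tail (V \<star> V) x"
    and "tail (V \<star> V) x \<le> 2 * tail V (x - a) + 2 * tail V (x / 2) * tail V a"
proof -
  have dV: "is_distr V" using nn unfolding distr_nonneg_def by auto
  interpret V: real_distribution V using real_distribution_of_is_distr[OF dV] .
  interpret Q: pair_prob_space V V by unfold_locales
  let ?Q = "V \<Otimes>\<^sub>M V"
  have setsQ: "sets ?Q = sets (borel \<Otimes>\<^sub>M (borel::real measure))"
    by (metis V.events_eq_borel sets_pair_measure_cong)
  have rect: "A \<in> sets borel \<Longrightarrow> B \<in> sets borel \<Longrightarrow> A \<times> B \<in> sets ?Q" for A B :: "real set"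
    unfolding setsQ by (rule pair_measureI)
  have times: "A \<in> sets borel \<Longrightarrow> B \<in> sets borel \<Longrightarrow> measure ?Q (A \<times> B) = measure V A * measure V B" for A B
    by (simp add: V.emeasure_pair_measure_Times measure_def enn2real_mult)
  have tl: "tail V y = measure V {y<..}" for y by (rule tail_eq_measure_greaterThan[OF dV])
  let ?S = "{p::real \<times> real. x < fst p + snd p}"
  have "open ?S" by (intro open_Collect_less continuous_intros)
  hence S[measurable]: "?S \<in> sets ?Q" unfolding setsQ borel_prod by (rule borel_open)
  have conv: "tail (V \<star> V) x = measure ?Q ?S"
  proof -
    have "measure (V \<star> V) {..x} = measure ?Q ((\<lambda>(a, b). a + b) -` {..x} \<inter> space ?Q)"
      unfolding convolution_def by (rule measure_distr) auto
    also have "\<dots> = measure ?Q (space ?Q - ?S)"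
      by (rule arg_cong[where f="measure ?Q"]) (auto simp: space_pair_measure)
    also have "\<dots> = 1 - measure ?Q ?S" by (rule Q.prob_compl[OF S])
    finally show ?thesis unfolding tail_def by simp
  qed
  show "2 * tail V x - tail V x ^ 2 \<le> tail (V \<star> V) x"
  proof -
    let ?A1 = "{x<..} \<times> (UNIV::real set)" and ?A2 = "(UNIV::real set) \<times> {x<..}"
    let ?N = "({..<0::real} \<times> (UNIV::real set)) \<union> (UNIV \<times> {..<0})"
    have N: "?N \<in> sets ?Q" by (intro sets.Un rect) auto
    have "measure ?Q ?N \<le> measure ?Q ({..<0::real} \<times> (UNIV::real set)) + measure ?Q (UNIV \<times> {..<0})"
      by (rule measure_Un_le) (auto intro: rect)
    also have "\<dots> = 0" using nn by (simp add: times distr_nonneg_def)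
    finally have N0: "measure ?Q ?N = 0" by (simp add: measure_nonneg order_antisym)
    have "measure ?Q (?A1 \<union> ?A2) = measure ?Q ?A1 + measure ?Q (?A2 - ?A1)"
      by (rule Q.finite_measure_Union') (auto intro: rect)
    also have "?A2 - ?A1 = {..x} \<times> {x<..}" by auto
    finally have "2 * tail V x - tail V x ^ 2 = measure ?Q (?A1 \<union> ?A2)"
      by (simp add: times tl[symmetric] V.prob_space[unfolded V.space_eq_univ] power2_eq_square
          tail_def algebra_simps)
    also have "\<dots> \<le> measure ?Q (?S \<union> ?N)"
      by (rule Q.finite_measure_mono[OF _ sets.Un[OF S N]]) auto
    also have "\<dots> \<le> measure ?Q ?S + measure ?Q ?N" by (rule measure_Un_le[OF S N])
    finally show ?thesis using N0 conv by simp
  qed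
  show "tail (V \<star> V) x \<le> 2 * tail V (x - a) + 2 * tail V (x / 2) * tail V a"
  proof -
    let ?A1 = "{x - a<..} \<times> (UNIV::real set)" and ?A2 = "(UNIV::real set) \<times> {x - a<..}"
    let ?A3 = "{x/2<..} \<times> {a<..}" and ?A4 = "{a<..} \<times> {x/2<..}"
    have "measure ?Q ?S \<le> measure ?Q (?A1 \<union> ?A2 \<union> ?A3 \<union> ?A4)"
      by (rule Q.finite_measure_mono) (auto intro: rect)
    also have "\<dots> \<le> measure ?Q (?A1 \<union> ?A2 \<union> ?A3) + measure ?Q ?A4"
      by (rule measure_Un_le) (auto intro: rect)
    also have "measure ?Q (?A1 \<union> ?A2 \<union> ?A3) \<le> measure ?Q (?A1 \<union> ?A2) + measure ?Q ?A3"
      by (rule measure_Un_le) (auto intro: rect)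
    also have "measure ?Q (?A1 \<union> ?A2) \<le> measure ?Q ?A1 + measure ?Q ?A2"
      by (rule measure_Un_le) (auto intro: rect)
    finally show ?thesis
      by (simp add: conv times tl[symmetric] V.prob_space[unfolded V.space_eq_univ] algebra_simps)
  qed
qed

lemma subexponential_of_long_tailed_dominated_variation:
  assumes nn: "distr_nonneg V" and pos: "\<And>x. tail V x > 0"
    and lim: "((\<lambda>x. tail V (x - 1) / tail V x) \<longlongrightarrow> 1) at_top"
    and dominated: "\<And>x. tail V (x / 2) \<le> C * tail V x"
  shows "subexponential V"
proof -
  have dV: "is_distr V" using nn unfolding distr_nonneg_def by auto
  have C: "C > 0" using dominated[of 0] pos[of 0] pos[of "0/2"] by (simp add: zero_less_mult_iff)
  have "((\<lambda>x. tail (V \<star> V) x / (2 * tail V x)) \<longlongrightarrow> 1) at_top"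
  proof (rule tendstoI)
    fix e :: real assume e: "e > 0"
    have "\<forall>\<^sub>F a in at_top. tail V a < e / (2 * C)"
      using tail_tendsto_0[OF dV] e C by (intro order_tendstoD) auto
    moreover have "\<forall>\<^sub>F a in at_top. a \<ge> (0::real)" by (rule eventually_ge_at_top)
    ultimately have "\<forall>\<^sub>F a in at_top. a \<ge> 0 \<and> tail V a < e / (2 * C)"
      by eventually_elim simp
    then obtain a where a0: "a \<ge> 0" and "tail V a < e / (2 * C)"
      unfolding eventually_at_top_linorder by blast
    hence Ca: "C * tail V a < e / 2" using C by (simp add: field_simps)
    have ev1: "\<forall>\<^sub>F x in at_top. tail V (x - a) / tail V x < 1 + e / 2"
      using shift_ratio_tendsto_1[OF pos tail_antimono[OF dV] lim a0] e by (intro order_tendstoD) auto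
    have ev2: "\<forall>\<^sub>F x in at_top. tail V x < e"
      using tail_tendsto_0[OF dV] e by (intro order_tendstoD) auto
    show "\<forall>\<^sub>F x in at_top. dist (tail (V \<star> V) x / (2 * tail V x)) 1 < e"
      using ev1 ev2
    proof eventually_elim
      case (elim x)
      have vx: "tail V x > 0" by (rule pos)
      have "tail (V \<star> V) x / (2 * tail V x)
          \<le> (2 * tail V (x - a) + 2 * tail V (x / 2) * tail V a) / (2 * tail V x)"
        using tail_convolution_self_bounds(2)[OF nn, of x a] vx by (intro divide_right_mono) auto
      also have "\<dots> = tail V (x - a) / tail V x + tail V (x / 2) * tail V a / tail V x"
        using vx by (simp add: field_simps)
      also have "tail V (x / 2) * tail V a / tail V x \<le> C * tail V a"
      proof -
        have "tail V (x / 2) * tail V a \<le> (C * tail V x) * tail V a"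
          using dominated[of x] pos[of a] by (intro mult_right_mono) auto
        thus ?thesis using vx by (simp add: field_simps)
      qed
      finally have upper: "tail (V \<star> V) x / (2 * tail V x) < 1 + e" using elim Ca by linarith
      have "1 - tail V x / 2 = (2 * tail V x - tail V x ^ 2) / (2 * tail V x)"
        using vx by (simp add: field_simps power2_eq_square)
      also have "\<dots> \<le> tail (V \<star> V) x / (2 * tail V x)"
        using tail_convolution_self_bounds(1)[OF nn, of x] vx by (intro divide_right_mono) auto
      finally have lower: "tail (V \<star> V) x / (2 * tail V x) > 1 - e" using elim e by linarith
      show ?case using upper lower by (simp add: dist_real_def abs_less_iff)
    qed
  qed
  hence "(\<lambda>x. tail (V \<star> V) x) \<sim>[at_top] (\<lambda>x. 2 * tail V x)"
    by (intro asymp_equivI') simp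
  thus ?thesis unfolding subexponential_def using nn pos by auto
qed

definition dyadic_weight :: "nat \<Rightarrow> real" where
  "dyadic_weight n = (1/2) ^ Suc n"

definition dyadic_geometric :: "real measure" where
  "dyadic_geometric = distr (measure_pmf (geometric_pmf (1/2))) borel (\<lambda>n. 2 ^ n)"

lemma dyadic_weight_pos: "dyadic_weight n > 0"
  by (simp add: dyadic_weight_def)

lemma dyadic_weight_sums: "dyadic_weight sums 1"
proof -
  have "(\<lambda>n. 1/2 * (1/2) ^ n) sums (1/2 * (1 / (1 - 1/2 :: real)))"
    by (intro sums_mult geometric_sums) simp
  thus ?thesis by (simp add: dyadic_weight_def[abs_def])
qed

lemma suminf_dyadic_weight: "suminf dyadic_weight = 1"
  using dyadic_weight_sums by (rule sums_unique[symmetric])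

lemma summable_dyadic_weight_mult:
  assumes "\<And>n. 0 \<le> f n" "\<And>n. f n \<le> 1"
  shows "summable (\<lambda>n. dyadic_weight n * f n)"
proof (rule summable_comparison_test'[OF sums_summable[OF dyadic_weight_sums], of 0])
  fix n show "norm (dyadic_weight n * f n) \<le> dyadic_weight n"
    using assms[of n] dyadic_weight_pos[of n] by (simp add: mult_left_le)
qed

lemma suminf_dyadic_weight_mult_nonneg:
  assumes "\<And>n. 0 \<le> f n" "\<And>n. f n \<le> 1"
  shows "(\<Sum>n. dyadic_weight n * f n) \<ge> 0"
  using assms dyadic_weight_pos[THEN less_imp_le]
  by (intro suminf_nonneg summable_dyadic_weight_mult) auto

lemma suminf_ennreal_dyadic_weight:
  assumes "\<And>n. 0 \<le> f n" "\<And>n. f n \<le> 1"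
  shows "(\<Sum>n. ennreal (dyadic_weight n) * ennreal (f n)) = ennreal (\<Sum>n. dyadic_weight n * f n)"
proof -
  have "(\<Sum>n. ennreal (dyadic_weight n) * ennreal (f n)) = (\<Sum>n. ennreal (dyadic_weight n * f n))"
    using assms dyadic_weight_pos by (simp add: ennreal_mult less_imp_le)
  also have "\<dots> = ennreal (\<Sum>n. dyadic_weight n * f n)"
    using assms dyadic_weight_pos[THEN less_imp_le]
    by (intro suminf_ennreal2 summable_dyadic_weight_mult) auto
  finally show ?thesis .
qed

lemma suminf_dyadic_weight_from: "(\<Sum>n. dyadic_weight n * of_bool (k \<le> n)) = (1/2) ^ k"
proof -
  let ?f = "\<lambda>n. dyadic_weight n * of_bool (k \<le> n)"
  have "(\<lambda>i. ?f (i + k)) = (\<lambda>i. (1/2) ^ k * dyadic_weight i)"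
    by (simp add: dyadic_weight_def power_add mult_ac)
  moreover have "(\<lambda>i. (1/2::real) ^ k * dyadic_weight i) sums ((1/2) ^ k * 1)"
    by (intro sums_mult dyadic_weight_sums)
  ultimately have "?f sums ((1/2) ^ k + (\<Sum>i<k. ?f i))"
    by (intro iffD1[OF sums_iff_shift]) simp
  thus ?thesis by (simp add: sums_iff)
qed

lemma sets_dyadic_geometric [simp]: "sets dyadic_geometric = sets borel"
  and space_dyadic_geometric [simp]: "space dyadic_geometric = UNIV"
  by (simp_all add: dyadic_geometric_def)

lemma prob_space_dyadic_geometric: "prob_space dyadic_geometric"
  unfolding dyadic_geometric_def
  by (rule prob_space.prob_space_distr) (auto simp: prob_space_measure_pmf)

lemma is_distr_dyadic_geometric: "is_distr dyadic_geometric"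
  unfolding is_distr_def using prob_space_dyadic_geometric by simp

lemma nn_integral_dyadic_geometric:
  assumes "h \<in> borel_measurable borel"
  shows "(\<integral>\<^sup>+ y. h y \<partial>dyadic_geometric) = (\<Sum>n. ennreal (dyadic_weight n) * h (2 ^ n))"
proof -
  have "(\<integral>\<^sup>+ y. h y \<partial>dyadic_geometric) = (\<integral>\<^sup>+ n. h (2 ^ n) \<partial>measure_pmf (geometric_pmf (1/2)))"
    unfolding dyadic_geometric_def by (rule nn_integral_distr) (use assms in auto)
  also have "\<dots> = (\<integral>\<^sup>+ n. ennreal (pmf (geometric_pmf (1/2)) n) * h (2 ^ n) \<partial>count_space UNIV)"
    by (rule nn_integral_measure_pmf)
  also have "\<dots> = (\<Sum>n. ennreal (dyadic_weight n) * h (2 ^ n))"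
    by (simp add: nn_integral_count_space_nat dyadic_weight_def)
  finally show ?thesis .
qed

lemma measure_dyadic_geometric:
  assumes "A \<in> sets borel"
  shows "measure dyadic_geometric A = (\<Sum>n. dyadic_weight n * indicator A ((2::real) ^ n))"
proof -
  have "emeasure dyadic_geometric A = (\<integral>\<^sup>+ y. indicator A y \<partial>dyadic_geometric)"
    using assms by simp
  also have "\<dots> = (\<Sum>n. ennreal (dyadic_weight n) * ennreal (indicator A ((2::real) ^ n)))"
    using assms by (subst nn_integral_dyadic_geometric) (auto simp: ennreal_indicator)
  also have "\<dots> = ennreal (\<Sum>n. dyadic_weight n * indicator A ((2::real) ^ n))"
    by (rule suminf_ennreal_dyadic_weight) (auto simp: indicator_def)
  finally show ?thesis
    by (simp add: measure_def suminf_dyadic_weight_mult_nonneg)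
qed

lemma tail_dyadic_geometric:
  "tail dyadic_geometric x = (\<Sum>n. dyadic_weight n * indicator {x<..} ((2::real) ^ n))"
  using tail_eq_measure_greaterThan[OF is_distr_dyadic_geometric] measure_dyadic_geometric[of "{x<..}"]
  by simp

lemma tail_dyadic_geometric_pos: "tail dyadic_geometric x > 0"
proof -
  obtain N :: nat where N: "x < 2 ^ N" using real_arch_pow[of 2 x] by auto
  have "0 < dyadic_weight N * indicator {x<..} ((2::real) ^ N)" using N dyadic_weight_pos[of N] by simp
  also have "\<dots> \<le> (\<Sum>n. dyadic_weight n * indicator {x<..} ((2::real) ^ n))"
    using dyadic_weight_pos[THEN less_imp_le]
    by (intro sum_le_suminf[of _ "{N}", simplified] summable_dyadic_weight_mult) auto
  finally show ?thesis by (simp add: tail_dyadic_geometric)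
qed

lemma tail_dyadic_geometric_pow2_minus_1: "tail dyadic_geometric (2 ^ k - 1) = (1/2) ^ k"
proof -
  have "(2::real) ^ k - 1 < 2 ^ n \<longleftrightarrow> k \<le> n" for n
  proof -
    have "(2::real) ^ k - 1 < 2 ^ n \<longleftrightarrow> real_of_int (2 ^ k - 1) < real_of_int (2 ^ n)" by simp
    also have "\<dots> \<longleftrightarrow> (2::int) ^ k \<le> 2 ^ n" by (simp only: of_int_less_iff) linarith
    finally show ?thesis by simp
  qed
  hence "indicator {2 ^ k - 1<..} ((2::real) ^ n) = (of_bool (k \<le> n) :: real)" for n
    by (simp add: indicator_def)
  thus ?thesis by (simp add: tail_dyadic_geometric suminf_dyadic_weight_from)
qed

lemma tail_dyadic_geometric_pow2: "tail dyadic_geometric (2 ^ k) = (1/2) ^ Suc k"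
proof -
  have "indicator {2 ^ k<..} ((2::real) ^ n) = (of_bool (Suc k \<le> n) :: real)" for n
    by (simp add: indicator_def Suc_le_eq)
  thus ?thesis by (simp only: tail_dyadic_geometric suminf_dyadic_weight_from)
qed

lemma dyadic_geometric_properties:
  "distr_nonneg dyadic_geometric" "\<not> continuous_distr dyadic_geometric" "\<not> long_tailed dyadic_geometric"
proof -
  have "measure dyadic_geometric {..<0} = (\<Sum>n. dyadic_weight n * indicator {..<0} ((2::real) ^ n))"
    by (rule measure_dyadic_geometric) simp
  also have "\<dots> = 0" by simp
  finally show "distr_nonneg dyadic_geometric"
    using is_distr_dyadic_geometric by (simp add: distr_nonneg_def)
  have "measure dyadic_geometric {1} = (\<Sum>n. dyadic_weight n * indicator {1} ((2::real) ^ n))"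
    by (rule measure_dyadic_geometric) simp
  also have "\<dots> = (\<Sum>n. if n = 0 then dyadic_weight n else 0)"
    by (rule suminf_cong) (use power_inject_exp[of "2::real" _ 0] in \<open>simp add: indicator_def\<close>)
  also have "\<dots> = dyadic_weight 0"
    by (rule sums_unique[symmetric, OF sums_single])
  finally show "\<not> continuous_distr dyadic_geometric"
    unfolding continuous_distr_def using dyadic_weight_pos[of 0] by force
  show "\<not> long_tailed dyadic_geometric"
  proof
    assume "long_tailed dyadic_geometric"
    from class_L_tail_ratio[OF this, of 1]
    have lim: "((\<lambda>x. tail dyadic_geometric (x - 1) / tail dyadic_geometric x) \<longlongrightarrow> 1) at_top" by simp
    have "filterlim (\<lambda>k::nat. (2::real) ^ k) at_top sequentially" by real_asymp
    from filterlim_compose[OF lim this]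
    have "(\<lambda>k. tail dyadic_geometric (2 ^ k - 1) / tail dyadic_geometric (2 ^ k)) \<longlonglongrightarrow> 1" .
    moreover have "tail dyadic_geometric (2 ^ k - 1) / tail dyadic_geometric (2 ^ k) = 2" for k
      by (simp add: tail_dyadic_geometric_pow2_minus_1 tail_dyadic_geometric_pow2 field_simps)
    ultimately show False using LIMSEQ_unique[OF tendsto_const, of "2::real" 1] by simp
  qed
qed

definition dyadic_mixture_tail :: "real measure \<Rightarrow> real \<Rightarrow> real" where
  "dyadic_mixture_tail F x = (\<Sum>n. dyadic_weight n * tail F (x / 2 ^ n))"

lemma measure_product_dyadic_geometric:
  assumes dF: "is_distr F" and A: "A \<in> sets borel"
  shows "measure (product_distr F dyadic_geometric) A
           = (\<Sum>n. dyadic_weight n * measure F {x. x * 2 ^ n \<in> A})"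
proof -
  interpret F: real_distribution F using real_distribution_of_is_distr[OF dF] .
  interpret G: prob_space dyadic_geometric by (rule prob_space_dyadic_geometric)
  interpret Q: pair_prob_space F dyadic_geometric by unfold_locales
  have "sets (F \<Otimes>\<^sub>M dyadic_geometric) = sets (borel \<Otimes>\<^sub>M (borel::real measure))"
    by (rule sets_pair_measure_cong) auto
  hence mult: "(\<lambda>(x::real, y). x * y) \<in> measurable (F \<Otimes>\<^sub>M dyadic_geometric) borel"
    by (subst measurable_cong_sets[OF _ refl]) measurable
  let ?B = "(\<lambda>(x::real, y). x * y) -` A \<inter> space (F \<Otimes>\<^sub>M dyadic_geometric)"
  have B: "?B \<in> sets (F \<Otimes>\<^sub>M dyadic_geometric)" using mult A by (rule measurable_sets)
  have slice: "(\<lambda>x. (x, 2 ^ n)) -` ?B = {x. x * 2 ^ n \<in> A}" for n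
    by (auto simp: space_pair_measure)
  have "emeasure (product_distr F dyadic_geometric) A = emeasure (F \<Otimes>\<^sub>M dyadic_geometric) ?B"
    unfolding product_distr_def by (rule emeasure_distr[OF mult A])
  also have "\<dots> = (\<integral>\<^sup>+ y. emeasure F ((\<lambda>x. (x, y)) -` ?B) \<partial>dyadic_geometric)"
    by (rule Q.emeasure_pair_measure_alt2[OF B])
  also have "\<dots> = (\<Sum>n. ennreal (dyadic_weight n) * emeasure F ((\<lambda>x. (x, 2 ^ n)) -` ?B))"
    using Q.measurable_emeasure_Pair2[OF B]
    by (intro nn_integral_dyadic_geometric) (simp add: measurable_cong_sets[OF sets_dyadic_geometric refl])
  also have "\<dots> = (\<Sum>n. ennreal (dyadic_weight n) * ennreal (measure F {x. x * 2 ^ n \<in> A}))"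
    unfolding slice F.emeasure_eq_measure ..
  also have "\<dots> = ennreal (\<Sum>n. dyadic_weight n * measure F {x. x * 2 ^ n \<in> A})"
    by (rule suminf_ennreal_dyadic_weight) auto
  moreover have "(\<Sum>n. dyadic_weight n * measure F {x. x * 2 ^ n \<in> A}) \<ge> 0"
    by (rule suminf_dyadic_weight_mult_nonneg) auto
  ultimately show ?thesis by (simp add: measure_def)
qed

lemma tail_product_dyadic_geometric:
  assumes dF: "is_distr F"
  shows "tail (product_distr F dyadic_geometric) = dyadic_mixture_tail F"
proof
  fix x
  have "measure (product_distr F dyadic_geometric) {..x}
          = (\<Sum>n. dyadic_weight n * measure F {y. y * 2 ^ n \<in> {..x}})"
    by (rule measure_product_dyadic_geometric[OF dF]) simp
  also have "\<dots> = (\<Sum>n. dyadic_weight n * (1 - tail F (x / 2 ^ n)))"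
  proof (rule suminf_cong)
    fix n :: nat
    have "{y. y * 2 ^ n \<in> {..x}} = {..x / 2 ^ n}" by (auto simp: field_simps)
    thus "dyadic_weight n * measure F {y. y * 2 ^ n \<in> {..x}} = dyadic_weight n * (1 - tail F (x / 2 ^ n))"
      by (simp add: tail_def)
  qed
  also have "\<dots> = suminf dyadic_weight - dyadic_mixture_tail F x"
    unfolding dyadic_mixture_tail_def using tail_nonneg[OF dF] tail_le_1[OF dF]
    by (subst suminf_diff[OF sums_summable[OF dyadic_weight_sums] summable_dyadic_weight_mult])
       (auto simp: algebra_simps)
  finally show "tail (product_distr F dyadic_geometric) x = dyadic_mixture_tail F x"
    by (simp add: tail_def suminf_dyadic_weight)
qed

lemma distr_nonneg_product_dyadic_geometric:
  assumes dF: "distr_nonneg F"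
  shows "distr_nonneg (product_distr F dyadic_geometric)"
proof -
  have d: "is_distr F" using dF by (simp add: distr_nonneg_def)
  interpret F: real_distribution F using real_distribution_of_is_distr[OF d] .
  interpret G: prob_space dyadic_geometric by (rule prob_space_dyadic_geometric)
  interpret Q: pair_prob_space F dyadic_geometric by unfold_locales
  have "sets (F \<Otimes>\<^sub>M dyadic_geometric) = sets (borel \<Otimes>\<^sub>M (borel::real measure))"
    by (rule sets_pair_measure_cong) auto
  hence "(\<lambda>(x::real, y). x * y) \<in> measurable (F \<Otimes>\<^sub>M dyadic_geometric) borel"
    by (subst measurable_cong_sets[OF _ refl]) measurable
  hence "prob_space (product_distr F dyadic_geometric)"
    unfolding product_distr_def by (rule Q.prob_space_distr)
  hence distr: "is_distr (product_distr F dyadic_geometric)"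
    by (simp add: is_distr_def product_distr_def)
  have "measure (product_distr F dyadic_geometric) {..<0}
          = (\<Sum>n. dyadic_weight n * measure F {y. y * 2 ^ n \<in> {..<0}})"
    by (rule measure_product_dyadic_geometric[OF d]) simp
  also have "\<dots> = 0"
  proof -
    have "{y::real. y * 2 ^ n \<in> {..<0}} = {..<0}" for n by (auto simp: mult_less_0_iff)
    thus ?thesis using dF by (simp add: distr_nonneg_def)
  qed
  finally show ?thesis using distr by (simp add: distr_nonneg_def)
qed

lemma summable_dyadic_mixture: "is_distr F \<Longrightarrow> summable (\<lambda>n. dyadic_weight n * tail F (x / 2 ^ n))"
  by (rule summable_dyadic_weight_mult) (auto simp: tail_nonneg tail_le_1)

lemma dyadic_weight_mult_tail_le_mixture:
  "is_distr F \<Longrightarrow> dyadic_weight m * tail F (x / 2 ^ m) \<le> dyadic_mixture_tail F x"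
  unfolding dyadic_mixture_tail_def using dyadic_weight_pos[THEN less_imp_le]
  by (intro sum_le_suminf[of _ "{m}", simplified] summable_dyadic_mixture) (auto simp: tail_nonneg)

lemma dyadic_mixture_tail_pos:
  "is_distr F \<Longrightarrow> (\<And>x. tail F x > 0) \<Longrightarrow> dyadic_mixture_tail F x > 0"
  using dyadic_weight_mult_tail_le_mixture[of F 0 x] dyadic_weight_pos[of 0]
  by (smt (verit) div_by_1 mult_pos_pos power_0)

lemma dyadic_mixture_tail_antimono:
  assumes "is_distr F" "x \<le> y"
  shows "dyadic_mixture_tail F y \<le> dyadic_mixture_tail F x"
  unfolding dyadic_mixture_tail_def using assms dyadic_weight_pos[THEN less_imp_le]
  by (intro suminf_le summable_dyadic_mixture mult_left_mono tail_antimono divide_right_mono) auto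

text \<open>Only the term of the least power of two \<open>2\<^sup>m \<ge> x\<close> is used; its weight exceeds \<open>1 / (4 x)\<close>.\<close>
lemma dyadic_mixture_tail_ge:
  assumes d: "is_distr F" and x: "x \<ge> 1"
  shows "tail F 1 / (4 * x) \<le> dyadic_mixture_tail F x"
proof -
  have ex: "\<exists>m::nat. x \<le> 2 ^ m" using real_arch_pow[of 2 x] by (auto intro: less_imp_le)
  define m where "m = (LEAST m::nat. x \<le> 2 ^ m)"
  have m1: "x \<le> 2 ^ m" unfolding m_def by (rule LeastI_ex[OF ex])
  have m2: "2 ^ m < 2 * x"
  proof (cases m)
    case 0 thus ?thesis using x by simp
  next
    case (Suc j)
    hence "\<not> x \<le> 2 ^ j" using not_less_Least[of j "\<lambda>m. x \<le> 2 ^ m"] unfolding m_def by auto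
    thus ?thesis using Suc by simp
  qed
  have "1 / (4 * x) \<le> dyadic_weight m"
    using m2 x by (simp add: dyadic_weight_def power_divide field_simps)
  hence "tail F 1 / (4 * x) \<le> dyadic_weight m * tail F 1"
    using tail_nonneg[OF d, of 1] tail_le_1[OF d, of 1] mult_right_mono by fastforce
  also have "\<dots> \<le> dyadic_weight m * tail F (x / 2 ^ m)"
    using m1 dyadic_weight_pos[of m]
    by (intro mult_left_mono tail_antimono[OF d]) (auto simp: field_simps)
  also have "\<dots> \<le> dyadic_mixture_tail F x" by (rule dyadic_weight_mult_tail_le_mixture[OF d])
  finally show ?thesis .
qed

lemma dyadic_mixture_tail_half_le:
  assumes d: "is_distr F"
  shows "dyadic_mixture_tail F (x / 2) \<le> 2 * dyadic_mixture_tail F x"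
proof -
  let ?f = "\<lambda>n. dyadic_weight n * tail F (x / 2 ^ n)"
  have s: "summable ?f" by (rule summable_dyadic_mixture[OF d])
  have "dyadic_mixture_tail F (x / 2) = (\<Sum>n. 2 * ?f (Suc n))"
    unfolding dyadic_mixture_tail_def by (rule suminf_cong) (simp add: dyadic_weight_def field_simps)
  also have "\<dots> = 2 * (dyadic_mixture_tail F x - ?f 0)"
    unfolding dyadic_mixture_tail_def suminf_split_head[OF s, symmetric]
    by (rule suminf_mult) (rule iffD2[OF summable_Suc_iff s])
  also have "\<dots> \<le> 2 * dyadic_mixture_tail F x"
    using dyadic_weight_pos[of 0] tail_nonneg[OF d] by simp
  finally show ?thesis .
qed

lemma mult_tail_shift_scale_tendsto_0:
  assumes d: "is_distr F" and lim: "((\<lambda>x. x * tail F x) \<longlongrightarrow> 0) at_top" and "c > 0"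
  shows "((\<lambda>x. x * tail F ((x - 1) / c)) \<longlongrightarrow> 0) at_top"
proof -
  have fl: "filterlim (\<lambda>x::real. (x - 1) / c) at_top at_top" using \<open>c > 0\<close> by real_asymp
  have "((\<lambda>x. c * ((x - 1) / c * tail F ((x - 1) / c)) + tail F ((x - 1) / c)) \<longlongrightarrow> c * 0 + 0) at_top"
    by (intro tendsto_intros filterlim_compose[OF lim fl] filterlim_compose[OF tail_tendsto_0[OF d] fl])
  moreover have "c * ((x - 1) / c * tail F ((x - 1) / c)) + tail F ((x - 1) / c) = x * tail F ((x - 1) / c)" for x
    using \<open>c > 0\<close> by (simp add: field_simps)
  ultimately show ?thesis by simp
qed

text \<open>Small arguments are controlled by uniform continuity of the tail on \<open>[0, y0]\<close>, large ones with
  shift \<open>2^-n \<le> 2^-k\<close> by the local bound, and the finitely many terms \<open>n < k\<close> by one error term.\<close>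
lemma tail_scaled_increment_le:
  assumes d: "is_distr F" and x: "x \<ge> 1" and "\<epsilon> \<ge> 0"
    and local: "\<And>y. y \<ge> y0 \<Longrightarrow> tail F (y - (1/2) ^ k) \<le> (1 + \<epsilon>) * tail F y"
    and cont: "\<And>u v. u \<in> {0..y0} \<Longrightarrow> v \<in> {0..y0} \<Longrightarrow> dist u v < \<delta> \<Longrightarrow>
                 dist (tail F u) (tail F v) < \<epsilon> * tail F y0"
    and x_large: "y0 < \<delta> * x"
  shows "tail F ((x - 1) / 2 ^ n) - tail F (x / 2 ^ n)
           \<le> \<epsilon> * tail F (x / 2 ^ n) + (if k = 0 then 0 else tail F ((x - 1) / 2 ^ k))"
    (is "_ \<le> _ + ?r")
proof -
  have r: "?r \<ge> 0" using tail_nonneg[OF d] by simp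
  have shift: "(x - 1) / 2 ^ n = x / 2 ^ n - (1/2) ^ n" by (simp add: field_simps power_divide)
  have nonneg: "0 \<le> \<epsilon> * tail F (x / 2 ^ n)" using \<open>\<epsilon> \<ge> 0\<close> tail_nonneg[OF d] by simp
  consider "x / 2 ^ n < y0" | "x / 2 ^ n \<ge> y0" "k \<le> n" | "k > n" by linarith
  then show ?thesis
  proof cases
    case 1
    have "(1/2) ^ n = (x / 2 ^ n) / x" using x by (simp add: power_divide)
    also have "\<dots> < y0 / x" using 1 x by (intro divide_strict_right_mono) auto
    also have "\<dots> < \<delta>" using x_large x by (simp add: pos_divide_less_eq mult.commute)
    finally have "dist ((x - 1) / 2 ^ n) (x / 2 ^ n) < \<delta>" by (simp add: shift dist_real_def)
    moreover have "(x - 1) / 2 ^ n \<in> {0..y0}" "x / 2 ^ n \<in> {0..y0}"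
      using 1 x by (auto simp: field_simps)
    ultimately have "dist (tail F ((x - 1) / 2 ^ n)) (tail F (x / 2 ^ n)) < \<epsilon> * tail F y0"
      using cont by blast
    moreover have "\<epsilon> * tail F y0 \<le> \<epsilon> * tail F (x / 2 ^ n)"
      using 1 \<open>\<epsilon> \<ge> 0\<close> by (intro mult_left_mono tail_antimono[OF d]) auto
    ultimately show ?thesis using r by (simp add: dist_real_def)
  next
    case 2
    have "(1/2::real) ^ n \<le> (1/2) ^ k" using 2 by (intro power_decreasing) auto
    hence "tail F ((x - 1) / 2 ^ n) \<le> tail F (x / 2 ^ n - (1/2) ^ k)"
      by (simp add: shift tail_antimono[OF d])
    also have "\<dots> \<le> (1 + \<epsilon>) * tail F (x / 2 ^ n)" using 2 local by simp
    finally show ?thesis using r by (simp add: algebra_simps)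
  next
    case 3
    have "(2::real) ^ n \<le> 2 ^ k" using 3 by (intro power_increasing) auto
    hence "tail F ((x - 1) / 2 ^ n) \<le> tail F ((x - 1) / 2 ^ k)"
      using x by (intro tail_antimono[OF d] divide_left_mono) auto
    thus ?thesis using 3 nonneg tail_nonneg[OF d, of "x / 2 ^ n"] by auto
  qed
qed

lemma dyadic_mixture_tail_increment_le:
  assumes d: "is_distr F" and x: "x \<ge> 1" and "\<epsilon> \<ge> 0"
    and local: "\<And>y. y \<ge> y0 \<Longrightarrow> tail F (y - (1/2) ^ k) \<le> (1 + \<epsilon>) * tail F y"
    and cont: "\<And>u v. u \<in> {0..y0} \<Longrightarrow> v \<in> {0..y0} \<Longrightarrow> dist u v < \<delta> \<Longrightarrow>
                 dist (tail F u) (tail F v) < \<epsilon> * tail F y0"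
    and x_large: "y0 < \<delta> * x"
  shows "dyadic_mixture_tail F (x - 1) - dyadic_mixture_tail F x
           \<le> \<epsilon> * dyadic_mixture_tail F x + (if k = 0 then 0 else tail F ((x - 1) / 2 ^ k))"
    (is "_ \<le> _ + ?r")
proof -
  let ?a = "\<lambda>n. dyadic_weight n * tail F ((x - 1) / 2 ^ n)"
  let ?b = "\<lambda>n. dyadic_weight n * tail F (x / 2 ^ n)"
  have sa: "summable ?a" and sb: "summable ?b" by (rule summable_dyadic_mixture[OF d])+
  have sw: "summable dyadic_weight" by (rule sums_summable[OF dyadic_weight_sums])
  have "dyadic_mixture_tail F (x - 1) - dyadic_mixture_tail F x = (\<Sum>n. ?a n - ?b n)"
    unfolding dyadic_mixture_tail_def by (rule suminf_diff[OF sa sb])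
  also have "\<dots> \<le> (\<Sum>n. \<epsilon> * ?b n + ?r * dyadic_weight n)"
  proof (rule suminf_le)
    fix n
    have "dyadic_weight n * (tail F ((x - 1) / 2 ^ n) - tail F (x / 2 ^ n))
            \<le> dyadic_weight n * (\<epsilon> * tail F (x / 2 ^ n) + ?r)"
      using dyadic_weight_pos[of n]
      by (intro mult_left_mono tail_scaled_increment_le[OF d x \<open>\<epsilon> \<ge> 0\<close> local cont x_large]) auto
    thus "?a n - ?b n \<le> \<epsilon> * ?b n + ?r * dyadic_weight n" by (simp add: algebra_simps)
    show "summable (\<lambda>n. ?a n - ?b n)" using sa sb by (rule summable_diff)
    show "summable (\<lambda>n. \<epsilon> * ?b n + ?r * dyadic_weight n)"
      using sb sw by (intro summable_add summable_mult summable_mult2)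
  qed
  also have "\<dots> = (\<Sum>n. \<epsilon> * ?b n) + (\<Sum>n. ?r * dyadic_weight n)"
    using sb sw by (intro suminf_add[symmetric] summable_mult summable_mult2)
  also have "\<dots> = \<epsilon> * dyadic_mixture_tail F x + ?r"
    using sb sw unfolding dyadic_mixture_tail_def by (simp add: suminf_mult suminf_dyadic_weight)
  finally show ?thesis .
qed

lemma dyadic_mixture_tail_long_tailed:
  assumes d: "is_distr F" and c: "continuous_distr F" and pos: "\<And>x. tail F x > 0"
    and local: "\<And>\<epsilon>. \<epsilon> > 0 \<Longrightarrow> \<exists>k. (\<forall>\<^sub>F y in at_top. tail F (y - (1/2) ^ k) \<le> (1 + \<epsilon>) * tail F y) \<and>
                  (k = 0 \<or> ((\<lambda>x. x * tail F x) \<longlongrightarrow> 0) at_top)"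
  shows "((\<lambda>x. dyadic_mixture_tail F (x - 1) / dyadic_mixture_tail F x) \<longlongrightarrow> 1) at_top"
proof (rule tendstoI)
  fix e :: real assume "e > 0"
  define \<epsilon> where "\<epsilon> = e / 3"
  have \<epsilon>: "\<epsilon> > 0" using \<open>e > 0\<close> by (simp add: \<epsilon>_def)
  obtain k where "\<forall>\<^sub>F y in at_top. tail F (y - (1/2) ^ k) \<le> (1 + \<epsilon>) * tail F y"
    and k: "k = 0 \<or> ((\<lambda>x. x * tail F x) \<longlongrightarrow> 0) at_top"
    using local[OF \<epsilon>] by blast
  then obtain y0 where shift: "\<And>y. y \<ge> y0 \<Longrightarrow> tail F (y - (1/2) ^ k) \<le> (1 + \<epsilon>) * tail F y"
    unfolding eventually_at_top_linorder by blast
  have "uniformly_continuous_on {0..y0} (tail F)" by (rule uniformly_continuous_on_tail[OF d c])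
  then obtain \<delta> where "\<delta> > 0" and cont: "\<And>u v. u \<in> {0..y0} \<Longrightarrow> v \<in> {0..y0} \<Longrightarrow> dist u v < \<delta> \<Longrightarrow>
                 dist (tail F u) (tail F v) < \<epsilon> * tail F y0"
    unfolding uniformly_continuous_on_def using \<epsilon> pos[of y0] by (metis mult_pos_pos)
  define r where "r x = (if k = 0 then 0 else tail F ((x - 1) / 2 ^ k))" for x
  have "\<forall>\<^sub>F x in at_top. x \<ge> 1 \<and> y0 < \<delta> * x"
    using eventually_ge_at_top[of 1] eventually_gt_at_top[of "y0 / \<delta>"]
    by eventually_elim (use \<open>\<delta> > 0\<close> in \<open>simp add: field_simps\<close>)
  moreover have "\<forall>\<^sub>F x in at_top. x * r x < \<epsilon> * tail F 1 / 4"
  proof (cases "k = 0")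
    case True thus ?thesis using \<epsilon> pos[of 1] by (simp add: r_def)
  next
    case False
    with k have "((\<lambda>x. x * tail F ((x - 1) / 2 ^ k)) \<longlongrightarrow> 0) at_top"
      by (auto intro: mult_tail_shift_scale_tendsto_0[OF d])
    from order_tendstoD(2)[OF this, of "\<epsilon> * tail F 1 / 4"] show ?thesis
      using False \<epsilon> pos[of 1] by (simp add: r_def)
  qed
  ultimately show "\<forall>\<^sub>F x in at_top.
      dist (dyadic_mixture_tail F (x - 1) / dyadic_mixture_tail F x) 1 < e"
  proof eventually_elim
    case (elim x)
    hence x: "x \<ge> 1" by simp
    have lower: "tail F 1 / (4 * x) \<le> dyadic_mixture_tail F x"
      by (rule dyadic_mixture_tail_ge[OF d x])
    have T: "dyadic_mixture_tail F x > 0" by (rule dyadic_mixture_tail_pos[OF d pos])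
    have "r x < \<epsilon> * (tail F 1 / (4 * x))" using elim by (simp add: field_simps)
    also have "\<dots> \<le> \<epsilon> * dyadic_mixture_tail F x" using lower \<epsilon> by (intro mult_left_mono) auto
    finally have "r x < \<epsilon> * dyadic_mixture_tail F x" .
    moreover have "dyadic_mixture_tail F (x - 1) - dyadic_mixture_tail F x
        \<le> \<epsilon> * dyadic_mixture_tail F x + r x"
      unfolding r_def using \<epsilon> elim
      by (intro dyadic_mixture_tail_increment_le[OF d x _ shift cont]) auto
    ultimately have "dyadic_mixture_tail F (x - 1) / dyadic_mixture_tail F x \<le> 1 + 2 * \<epsilon>"
      using T by (simp add: field_simps)
    moreover have "1 \<le> dyadic_mixture_tail F (x - 1) / dyadic_mixture_tail F x"
      using T dyadic_mixture_tail_antimono[OF d, of "x - 1" x] by simp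
    ultimately show ?case using \<open>e > 0\<close> by (simp add: dist_real_def \<epsilon>_def)
  qed
qed

lemma class_L_eventually_small_shift_le:
  assumes L: "class_L \<gamma> F" and nl: "\<not> (\<gamma> > 0 \<and> lattice_distr F)" and "\<epsilon> > 0"
  shows "\<exists>k. (\<forall>\<^sub>F y in at_top. tail F (y - (1/2) ^ k) \<le> (1 + \<epsilon>) * tail F y) \<and> (k = 0 \<or> \<gamma> > 0)"
proof -
  obtain k where k: "exp (\<gamma> * (1/2) ^ k) < 1 + \<epsilon>" and "k = 0 \<or> \<gamma> > 0"
  proof (cases "\<gamma> > 0")
    case True
    have "(\<lambda>k. exp (\<gamma> * (1/2) ^ k)) \<longlonglongrightarrow> exp (\<gamma> * 0)"
      by (intro tendsto_intros LIMSEQ_power_zero) simp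
    hence "\<forall>\<^sub>F k in sequentially. exp (\<gamma> * (1/2) ^ k) < 1 + \<epsilon>"
      using \<open>\<epsilon> > 0\<close> by (intro order_tendstoD) auto
    with True that show ?thesis unfolding eventually_sequentially by blast
  next
    case False
    hence "exp (\<gamma> * (1/2) ^ 0) \<le> 1" by simp
    hence "exp (\<gamma> * (1/2) ^ 0) < 1 + \<epsilon>" using \<open>\<epsilon> > 0\<close> by linarith
    with that show ?thesis by blast
  qed
  moreover have "\<forall>\<^sub>F y in at_top. tail F (y - (1/2) ^ k) \<le> (1 + \<epsilon>) * tail F y"
    using class_L_tail_ratio[OF L nl] k class_L_tail_pos[OF L] by (rule eventually_le_of_ratio_tendsto)
  ultimately show ?thesis by blast
qed
lemma dyadic_mixture_tail_not_bigo_of_decay: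
  assumes d: "is_distr F" and pos: "\<And>x. tail F x > 0"
    and decay: "((\<lambda>y. y * tail F y) \<longlongrightarrow> 0) at_top" and "t > 0"
  shows "dyadic_mixture_tail F \<notin> O(\<lambda>x. tail F (x / t))"
proof
  assume "dyadic_mixture_tail F \<in> O(\<lambda>x. tail F (x / t))"
  then obtain c where "c > 0"
    and bigo: "\<forall>\<^sub>F x in at_top. norm (dyadic_mixture_tail F x) \<le> c * norm (tail F (x / t))"
    by (elim landau_o.bigE)
  have "filterlim (\<lambda>x. x / t) at_top at_top" using \<open>t > 0\<close> by real_asymp
  from tendsto_mult_left[OF filterlim_compose[OF decay this], of t]
  have "((\<lambda>x. x * tail F (x / t)) \<longlongrightarrow> 0) at_top" using \<open>t > 0\<close> by simp
  from order_tendstoD(2)[OF this, of "tail F 1 / (4 * c)"]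
  have "\<forall>\<^sub>F x in at_top. x * tail F (x / t) < tail F 1 / (4 * c)" using pos[of 1] \<open>c > 0\<close> by simp
  with bigo eventually_ge_at_top[of 1]
  have "\<forall>\<^sub>F x::real in at_top. False"
  proof eventually_elim
    case (elim x)
    have "tail F 1 / (4 * x) \<le> c * tail F (x / t)"
      using dyadic_mixture_tail_ge[OF d, of x] elim dyadic_mixture_tail_pos[OF d pos, of x] pos[of "x / t"]
      by simp
    hence "tail F 1 / (4 * c) \<le> x * tail F (x / t)" using elim \<open>c > 0\<close> by (simp add: field_simps)
    with elim show False by linarith
  qed
  thus False by simp
qed
lemma dominated_variation_of_dyadic_mixture_bigo:
  assumes d: "is_distr F" and pos: "\<And>x. tail F x > 0"
    and "dyadic_mixture_tail F \<in> O(\<lambda>x. tail F (x / t))" and "t > 0"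
  shows "\<exists>C. \<forall>x. tail F (x / 2) \<le> C * tail F x"
proof -
  obtain c where "c > 0"
    and bigo: "\<forall>\<^sub>F x in at_top. norm (dyadic_mixture_tail F x) \<le> c * norm (tail F (x / t))"
    using assms(3) by (elim landau_o.bigE)
  obtain n :: nat where n: "2 * t < 2 ^ n" using real_arch_pow[of 2 "2 * t"] by auto
  define K where "K = c / dyadic_weight n"
  have "\<forall>\<^sub>F x in at_top. tail F (x / (2 * t)) \<le> K * tail F (x / t)"
    using bigo eventually_ge_at_top[of 0]
  proof eventually_elim
    case (elim x)
    have "dyadic_weight n * tail F (x / (2 * t)) \<le> dyadic_weight n * tail F (x / 2 ^ n)"
      using elim n \<open>t > 0\<close> dyadic_weight_pos[of n]
      by (intro mult_left_mono tail_antimono[OF d] divide_left_mono) auto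
    also have "\<dots> \<le> dyadic_mixture_tail F x" by (rule dyadic_weight_mult_tail_le_mixture[OF d])
    also have "\<dots> \<le> c * tail F (x / t)"
      using elim dyadic_mixture_tail_pos[OF d pos, of x] pos[of "x / t"] by simp
    finally show ?case using dyadic_weight_pos[of n] by (simp add: K_def field_simps)
  qed
  moreover have "filterlim (\<lambda>y. t * y) at_top at_top" using \<open>t > 0\<close> by real_asymp
  ultimately have "\<forall>\<^sub>F y in at_top. tail F (t * y / (2 * t)) \<le> K * tail F (t * y / t)"
    unfolding filterlim_iff by blast
  then obtain Y where Y: "\<And>y. y \<ge> Y \<Longrightarrow> tail F (y / 2) \<le> K * tail F y"
    using \<open>t > 0\<close> unfolding eventually_at_top_linorder by auto
  have "tail F (y / 2) \<le> max K (1 / tail F Y) * tail F y" for y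
  proof (cases "y \<ge> Y")
    case True
    thus ?thesis using Y[OF True] pos[of y] by (smt (verit) max.cobounded1 mult_right_mono)
  next
    case False
    have "tail F (y / 2) \<le> (1 / tail F Y) * tail F Y" using tail_le_1[OF d] pos[of Y] by simp
    also have "\<dots> \<le> (1 / tail F Y) * tail F y"
      using False pos[of Y] by (intro mult_left_mono tail_antimono[OF d]) auto
    also have "\<dots> \<le> max K (1 / tail F Y) * tail F y" using pos[of y] by (intro mult_right_mono) auto
    finally show ?thesis .
  qed
  thus ?thesis by blast
qed

lemma dyadic_mixture_tail_not_bigo_of_long_tailed:
  assumes nn: "distr_nonneg F" and pos: "\<And>x. tail F x > 0"
    and lim: "((\<lambda>x. tail F (x - 1) / tail F x) \<longlongrightarrow> 1) at_top"
    and "\<not> subexponential F" and "t > 0"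
  shows "dyadic_mixture_tail F \<notin> O(\<lambda>x. tail F (x / t))"
proof
  have d: "is_distr F" using nn by (simp add: distr_nonneg_def)
  assume "dyadic_mixture_tail F \<in> O(\<lambda>x. tail F (x / t))"
  from dominated_variation_of_dyadic_mixture_bigo[OF d pos this \<open>t > 0\<close>]
  obtain C where "\<And>x. tail F (x / 2) \<le> C * tail F x" by blast
  with subexponential_of_long_tailed_dominated_variation[OF nn pos lim] \<open>\<not> subexponential F\<close>
  show False by blast
qed

theorem proposition1p1:
  fixes F :: "real measure"
  assumes "distr_nonneg F"
    and "continuous_distr F"
    and "(long_tailed F \<and> \<not> subexponential F) \<or> (\<exists>\<gamma>>0. class_L \<gamma> F)"
  shows "\<exists>G. distr_nonneg G \<and> \<not> continuous_distr G \<and> (\<forall>x. tail G x > 0) \<and>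
    \<not> long_tailed G \<and> subexponential (product_distr F G) \<and>
    \<not> (\<exists>t\<ge>1. (\<lambda>x. tail (product_distr F G) x) \<in> O(\<lambda>x. tail F (x / t))) \<and>
    \<not> (\<exists>d\<in>disc_points G. (\<lambda>x. tail (product_distr F G) x) \<in> O(\<lambda>x. tail F (x / d)))"
proof -
  have d: "is_distr F" using assms(1) by (simp add: distr_nonneg_def)
  from assms(3) obtain \<gamma> where L: "class_L \<gamma> F" and cases: "\<gamma> = 0 \<and> \<not> subexponential F \<or> \<gamma> > 0"
    by blast
  have nl: "\<not> (\<gamma> > 0 \<and> lattice_distr F)" using continuous_distr_not_lattice[OF d assms(2)] by blast
  note pos = class_L_tail_pos[OF L] and ratio = class_L_tail_ratio[OF L nl, of 1]
  have decay: "((\<lambda>y. y * tail F y) \<longlongrightarrow> 0) at_top" if "\<gamma> > 0"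
    using ratio by (intro mult_self_tendsto_0_of_shift_ratio[OF pos tail_le_1[OF d] that]) simp
  have long_tailed_H: "((\<lambda>x. dyadic_mixture_tail F (x - 1) / dyadic_mixture_tail F x) \<longlongrightarrow> 1) at_top"
    using class_L_eventually_small_shift_le[OF L nl] decay
    by (intro dyadic_mixture_tail_long_tailed[OF d assms(2) pos]) blast
  have "subexponential (product_distr F dyadic_geometric)"
    by (rule subexponential_of_long_tailed_dominated_variation[where C = 2,
          OF distr_nonneg_product_dyadic_geometric[OF assms(1)]])
       (simp_all add: tail_product_dyadic_geometric[OF d] dyadic_mixture_tail_pos[OF d pos]
          long_tailed_H dyadic_mixture_tail_half_le[OF d])
  moreover have "dyadic_mixture_tail F \<notin> O(\<lambda>x. tail F (x / t))" if "t > 0" for t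
    using cases dyadic_mixture_tail_not_bigo_of_decay[OF d pos decay that]
      dyadic_mixture_tail_not_bigo_of_long_tailed[OF assms(1) pos _ _ that] ratio
    by auto
  hence "\<not> (\<exists>t\<ge>1. dyadic_mixture_tail F \<in> O(\<lambda>x. tail F (x / t)))"
    and "\<not> (\<exists>d\<in>disc_points dyadic_geometric. dyadic_mixture_tail F \<in> O(\<lambda>x. tail F (x / d)))"
    unfolding disc_points_def by auto
  ultimately show ?thesis
    using dyadic_geometric_properties tail_dyadic_geometric_pos
    by (intro exI[of _ dyadic_geometric]) (simp add: tail_product_dyadic_geometric[OF d])
qed

end
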